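(* Let $X_1,X_2,\dots$ be iid random variables satisfying condition $(\mathrm{P})$ with constant $a>0$, and $S_k=X_1+\dots+X_k$. Then for each $\epsilon>0$ there is $B>0$ such that for all $k\ge3$ and $u>0$, $$P(S_k>u+a)\le\epsilon P(S_k>u)+\frac{P(S_{k-1}>u)}{P(X_1>B)}.$$
   Context: A random variable $Y$ satisfies condition $(\mathrm{P})$ with constant $a>0$ if $P(Y>u)>0$ for all $u>0$ and $\lim_{u\to\infty}P(Y>u+a)/P(Y>u)=0$. *)

theory Defs
  imports "HOL-Probability.Probability"
begin

definition condP :: "'a measure \<Rightarrow> ('a \<Rightarrow> real) \<Rightarrow> real \<Rightarrow> bool" where
  "condP M Y a \<longleftrightarrow> a > 0 \<and>
     (\<forall>u>0. measure M {x \<in> space M. Y x > u} > 0) \<and>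
     ((\<lambda>u. measure M {x \<in> space M. Y x > u + a} / measure M {x \<in> space M. Y x > u})
        \<longlongrightarrow> 0) at_top"

end

theory Submission
  imports Defs
begin

(*
  The whole argument rests on one conditioning principle: if V and W are
  independent and a bound  c * Pr(P(v, W)) <= d * Pr(Q(v, W))  holds for every fixed value v,
  then it also holds with v replaced by the random V (the joint law of (V, W) is the product
  of the marginals, so both sides are integrals over the law of V).  For an independent real
  family this applies with V any measurable function of the coordinates outside a set A
  and W = X j, j not in A.

  For an iid sequence satisfying (P) write F(t) = Pr(X 0 > t), choose T > 0 with
  F(t + a) <= delta * F(t) for t >= T and set B = 2T + a.  Split S (m+2) = R + X m + X (m+1)
  with R = X 0 + ... + X (m - 1).  The event {S (m+2) > u + a} is covered by four events:
    E1 = {R >= u - B}, of probability at most Pr(S (m+1) > u) / F(B);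
    E2, E3: one of the last two summands exceeds a threshold t >= T by a, which costs delta;
    E4: R < u - B and both last summands exceed u - R - T; lowering the threshold
        of X m by a again costs delta.
  Hence the theorem holds with epsilon = 3 delta (already for k >= 2).
*)

lemma (in prob_space) emeasure_indep_pair_eq_integral:
  assumes ind: "indep_var N V K W" and P: "Measurable.pred (N \<Otimes>\<^sub>M K) P"
  shows "emeasure M {x\<in>space M. P (V x, W x)}
           = (\<integral>\<^sup>+v. emeasure M {x\<in>space M. P (v, W x)} \<partial>distr M N V)"
    and "(\<lambda>v. emeasure M {x\<in>space M. P (v, W x)}) \<in> borel_measurable N"
proof -
  have V: "V \<in> measurable M N" and W: "W \<in> measurable M K"
    using ind by (blast dest: indep_var_rv1 indep_var_rv2)+
  interpret DW: prob_space "distr M K W" by (rule prob_space_distr) (rule W)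
  define G where "G = {p\<in>space (N \<Otimes>\<^sub>M K). P p}"
  have G: "G \<in> sets (distr M N V \<Otimes>\<^sub>M distr M K W)"
    using P unfolding G_def by (simp add: sets_pair_measure_cong[OF sets_distr sets_distr])
  have slice: "emeasure (distr M K W) (Pair v -` G) = emeasure M {x\<in>space M. P (v, W x)}"
    if v: "v \<in> space N" for v
  proof -
    have "Pair v -` G \<in> sets K" unfolding G_def by (rule sets_Pair1) (use P in measurable)
    then have "emeasure (distr M K W) (Pair v -` G) = emeasure M (W -` (Pair v -` G) \<inter> space M)"
      by (rule emeasure_distr[OF W])
    also have "W -` (Pair v -` G) \<inter> space M = {x\<in>space M. P (v, W x)}"
      using W v by (auto simp: G_def measurable_def space_pair_measure)
    finally show ?thesis .
  qed
  have VW: "(\<lambda>x. (V x, W x)) \<in> measurable M (N \<Otimes>\<^sub>M K)"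
    using V W by measurable
  have "G \<in> sets (N \<Otimes>\<^sub>M K)"
    using P unfolding G_def by measurable
  then have "emeasure (distr M (N \<Otimes>\<^sub>M K) (\<lambda>x. (V x, W x))) G
      = emeasure M ((\<lambda>x. (V x, W x)) -` G \<inter> space M)"
    by (rule emeasure_distr[OF VW])
  also have "(\<lambda>x. (V x, W x)) -` G \<inter> space M = {x\<in>space M. P (V x, W x)}"
    using VW by (auto simp: G_def measurable_def)
  finally have "emeasure M {x\<in>space M. P (V x, W x)}
      = emeasure (distr M (N \<Otimes>\<^sub>M K) (\<lambda>x. (V x, W x))) G" ..
  also have "\<dots> = emeasure (distr M N V \<Otimes>\<^sub>M distr M K W) G"
    using ind by (simp add: indep_var_distribution_eq)
  also have "\<dots> = (\<integral>\<^sup>+v. emeasure (distr M K W) (Pair v -` G) \<partial>distr M N V)"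
    by (rule DW.emeasure_pair_measure_alt[OF G])
  also have "\<dots> = (\<integral>\<^sup>+v. emeasure M {x\<in>space M. P (v, W x)} \<partial>distr M N V)"
    by (rule nn_integral_cong) (simp add: slice)
  finally show "emeasure M {x\<in>space M. P (V x, W x)}
           = (\<integral>\<^sup>+v. emeasure M {x\<in>space M. P (v, W x)} \<partial>distr M N V)" .
  have "(\<lambda>v. emeasure (distr M K W) (Pair v -` G)) \<in> borel_measurable N"
    using DW.measurable_emeasure_Pair[OF G] by (simp cong: measurable_cong_sets)
  then show "(\<lambda>v. emeasure M {x\<in>space M. P (v, W x)}) \<in> borel_measurable N"
    by (simp add: slice cong: measurable_cong)
qed

lemma (in prob_space) indep_var_conditioning_bound:
  fixes c d :: real
  assumes ind: "indep_var N V K W"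
    and P: "Measurable.pred (N \<Otimes>\<^sub>M K) P" and Q: "Measurable.pred (N \<Otimes>\<^sub>M K) Q"
    and c: "c \<ge> 0" and d: "d \<ge> 0"
    and pointwise: "\<And>v. v \<in> space N \<Longrightarrow>
      c * prob {x\<in>space M. P (v, W x)} \<le> d * prob {x\<in>space M. Q (v, W x)}"
  shows "c * prob {x\<in>space M. P (V x, W x)} \<le> d * prob {x\<in>space M. Q (V x, W x)}"
proof -
  have ennreal_prob: "ennreal (e * prob E) = e * emeasure M E" if "e \<ge> 0" for e E
    using that by (simp add: emeasure_eq_measure ennreal_mult)
  have "ennreal (c * prob {x\<in>space M. P (V x, W x)})
      = (\<integral>\<^sup>+v. c * emeasure M {x\<in>space M. P (v, W x)} \<partial>distr M N V)"
    using emeasure_indep_pair_eq_integral[OF ind P] c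
    by (simp add: ennreal_prob nn_integral_cmult)
  also have "\<dots> \<le> (\<integral>\<^sup>+v. d * emeasure M {x\<in>space M. Q (v, W x)} \<partial>distr M N V)"
  proof (rule nn_integral_mono)
    fix v assume "v \<in> space (distr M N V)"
    then have vN: "v \<in> space N" by simp
    have "ennreal (c * prob {x\<in>space M. P (v, W x)}) \<le> ennreal (d * prob {x\<in>space M. Q (v, W x)})"
      by (rule ennreal_leI[OF pointwise[OF vN]])
    then show "c * emeasure M {x\<in>space M. P (v, W x)} \<le> d * emeasure M {x\<in>space M. Q (v, W x)}"
      by (simp only: ennreal_prob[OF c] ennreal_prob[OF d])
  qed
  also have "\<dots> = ennreal (d * prob {x\<in>space M. Q (V x, W x)})"
    using emeasure_indep_pair_eq_integral[OF ind Q] d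
    by (simp add: ennreal_prob nn_integral_cmult)
  finally show ?thesis
    using d by simp
qed

lemma (in prob_space) indep_coordinates_conditioning_bound:
  fixes X :: "'i \<Rightarrow> 'a \<Rightarrow> real" and c d :: real
  assumes ind: "indep_vars (\<lambda>_. borel) X UNIV" and j: "j \<notin> A"
    and g: "g \<in> measurable (PiM A (\<lambda>_. borel)) N"
    and Y: "\<And>x. x \<in> space M \<Longrightarrow> Y x = g (\<lambda>i\<in>A. X i x)"
    and P: "Measurable.pred (N \<Otimes>\<^sub>M borel) P" and Q: "Measurable.pred (N \<Otimes>\<^sub>M borel) Q"
    and c: "c \<ge> 0" and d: "d \<ge> 0"
    and pointwise: "\<And>v. v \<in> space N \<Longrightarrow>
      c * prob {x\<in>space M. P (v, X j x)} \<le> d * prob {x\<in>space M. Q (v, X j x)}"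
  shows "c * prob {x\<in>space M. P (Y x, X j x)} \<le> d * prob {x\<in>space M. Q (Y x, X j x)}"
proof -
  let ?lift = "\<lambda>R p. R (g (fst p), snd p j :: real)"
  have indep: "indep_var (PiM A (\<lambda>_. borel)) (\<lambda>x. \<lambda>i\<in>A. X i x)
      (PiM {j} (\<lambda>_. borel)) (\<lambda>x. \<lambda>i\<in>{j}. X i x)"
    using j by (intro indep_var_restrict[OF ind]) auto
  have lift_pred: "Measurable.pred (PiM A (\<lambda>_. borel) \<Otimes>\<^sub>M PiM {j} (\<lambda>_. borel)) (?lift R)"
    if R: "Measurable.pred (N \<Otimes>\<^sub>M borel) R" for R
  proof -
    have "(\<lambda>p. (g (fst p), snd p j))
        \<in> measurable (PiM A (\<lambda>_. borel) \<Otimes>\<^sub>M PiM {j} (\<lambda>_. borel)) (N \<Otimes>\<^sub>M borel)"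
      using g by measurable
    then show ?thesis by (rule measurable_compose[OF _ R])
  qed
  have "c * prob {x\<in>space M. ?lift P (\<lambda>i\<in>A. X i x, \<lambda>i\<in>{j}. X i x)}
      \<le> d * prob {x\<in>space M. ?lift Q (\<lambda>i\<in>A. X i x, \<lambda>i\<in>{j}. X i x)}"
  proof (rule indep_var_conditioning_bound[OF indep lift_pred[OF P] lift_pred[OF Q] c d])
    fix f :: "'i \<Rightarrow> real" assume "f \<in> space (PiM A (\<lambda>_. borel))"
    then have "g f \<in> space N" using g by (auto simp: measurable_def)
    then show "c * prob {x\<in>space M. ?lift P (f, \<lambda>i\<in>{j}. X i x)}
        \<le> d * prob {x\<in>space M. ?lift Q (f, \<lambda>i\<in>{j}. X i x)}"
      using pointwise by simp
  qed
  moreover have "{x\<in>space M. ?lift R (\<lambda>i\<in>A. X i x, \<lambda>i\<in>{j}. X i x)}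
      = {x\<in>space M. R (Y x, X j x)}" for R
    using Y by auto
  ultimately show ?thesis by simp
qed

locale iid_condP = prob_space +
  fixes X :: "nat \<Rightarrow> 'a \<Rightarrow> real" and a :: real
  assumes X_measurable [measurable]: "\<And>i. X i \<in> borel_measurable M"
    and X_indep: "indep_vars (\<lambda>_. borel) X UNIV"
    and X_identical: "\<And>i. distr M borel (X i) = distr M borel (X 0)"
    and X_condP: "condP M (X 0) a"
begin

definition tail :: "real \<Rightarrow> real" where
  "tail t = prob {x \<in> space M. X 0 x > t}"

lemma prob_X_greater: "prob {x \<in> space M. X j x > t} = tail t"
proof -
  have "prob {x \<in> space M. X i x > t} = measure (distr M borel (X i)) {t<..}" for i
    by (subst measure_distr) (auto intro!: arg_cong[where f=prob])
  then show ?thesis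
    by (simp add: tail_def X_identical[of j])
qed

lemma a_pos: "a > 0" and tail_pos: "t > 0 \<Longrightarrow> tail t > 0"
  using X_condP by (auto simp: condP_def tail_def)

lemma tail_shift_small:
  assumes "\<delta> > 0"
  obtains T where "T > 0" and "\<And>t. t \<ge> T \<Longrightarrow> tail (t + a) \<le> \<delta> * tail t"
proof -
  have "((\<lambda>t. tail (t + a) / tail t) \<longlongrightarrow> 0) at_top"
    using X_condP by (simp add: condP_def tail_def)
  from order_tendstoD(2)[OF this assms] obtain N where N: "\<And>t. t \<ge> N \<Longrightarrow> tail (t + a) / tail t < \<delta>"
    by (auto simp: eventually_at_top_linorder)
  show ?thesis
  proof (rule that[of "max N 1"])
    fix t assume "t \<ge> max N 1"
    then have "tail (t + a) / tail t < \<delta>" and "tail t > 0" using N tail_pos by auto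
    then show "tail (t + a) \<le> \<delta> * tail t" by (simp add: divide_less_eq)
  qed simp
qed

lemma sum_ge_times_tail_le:
  assumes j: "j \<notin> A"
  shows "tail B * prob {x\<in>space M. (\<Sum>i\<in>A. X i x) \<ge> c}
    \<le> prob {x\<in>space M. (\<Sum>i\<in>A. X i x) + X j x > c + B}"
proof -
  have "tail B * prob {x\<in>space M. (\<lambda>(y, w). y \<ge> c) ((\<Sum>i\<in>A. X i x), X j x)}
      \<le> 1 * prob {x\<in>space M. (\<lambda>(y, w). y \<ge> c \<and> w > B) ((\<Sum>i\<in>A. X i x), X j x)}"
  proof (rule indep_coordinates_conditioning_bound[OF X_indep j, where g="\<lambda>f. \<Sum>i\<in>A. f i" and N=borel])
    fix y :: real
    show "tail B * prob {x\<in>space M. (\<lambda>(y, w). y \<ge> c) (y, X j x)}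
        \<le> 1 * prob {x\<in>space M. (\<lambda>(y, w). y \<ge> c \<and> w > B) (y, X j x)}"
      by (cases "y \<ge> c") (simp_all add: prob_X_greater prob_space)
  qed (auto simp: tail_def)
  also have "\<dots> \<le> prob {x\<in>space M. (\<Sum>i\<in>A. X i x) + X j x > c + B}"
    by (auto intro!: finite_measure_mono)
  finally show ?thesis by simp
qed

lemma overshoot_one_summand:
  assumes j: "j \<notin> A" and \<delta>: "\<delta> \<ge> 0"
    and shift: "\<And>t. t \<ge> T \<Longrightarrow> tail (t + a) \<le> \<delta> * tail t"
  shows "prob {x\<in>space M. (\<Sum>i\<in>A. X i x) \<le> u - T \<and> X j x > u + a - (\<Sum>i\<in>A. X i x)}
    \<le> \<delta> * prob {x\<in>space M. (\<Sum>i\<in>A. X i x) + X j x > u}"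
proof -
  have "1 * prob {x\<in>space M. (\<lambda>(y, w). y \<le> u - T \<and> w > u + a - y) ((\<Sum>i\<in>A. X i x), X j x)}
      \<le> \<delta> * prob {x\<in>space M. (\<lambda>(y, w). y \<le> u - T \<and> w > u - y) ((\<Sum>i\<in>A. X i x), X j x)}"
  proof (rule indep_coordinates_conditioning_bound[OF X_indep j, where g="\<lambda>f. \<Sum>i\<in>A. f i" and N=borel])
    fix y :: real
    show "1 * prob {x\<in>space M. (\<lambda>(y, w). y \<le> u - T \<and> w > u + a - y) (y, X j x)}
        \<le> \<delta> * prob {x\<in>space M. (\<lambda>(y, w). y \<le> u - T \<and> w > u - y) (y, X j x)}"
    proof (cases "y \<le> u - T")
      case True
      have "{x\<in>space M. (\<lambda>(y, w). y \<le> u - T \<and> w > u + a - y) (y, X j x)} = {x\<in>space M. X j x > u - y + a}"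
        and "{x\<in>space M. (\<lambda>(y, w). y \<le> u - T \<and> w > u - y) (y, X j x)} = {x\<in>space M. X j x > u - y}"
        using True by auto
      then show ?thesis
        using True shift[of "u - y"] by (simp add: prob_X_greater)
    qed simp
  qed (use \<delta> in auto)
  also have "\<dots> \<le> \<delta> * prob {x\<in>space M. (\<Sum>i\<in>A. X i x) + X j x > u}"
    using \<delta> by (auto intro!: mult_left_mono finite_measure_mono)
  finally show ?thesis by simp
qed

text \<open>Estimate for E4: with the partial sum below u - B, the threshold u - Y - T of X j is at
  least T + a, so lowering it by a costs a factor delta.\<close>

lemma overshoot_two_summands:
  assumes j: "j \<notin> A" and l: "l \<notin> A" "l \<noteq> j" and \<delta>: "\<delta> \<ge> 0"
    and shift: "\<And>t. t \<ge> T \<Longrightarrow> tail (t + a) \<le> \<delta> * tail t"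
    and B: "2 * T + a \<le> B"
  shows "prob {x\<in>space M. (\<Sum>i\<in>A. X i x) < u - B
      \<and> X l x > u - (\<Sum>i\<in>A. X i x) - T \<and> X j x > u - (\<Sum>i\<in>A. X i x) - T}
    \<le> \<delta> * prob {x\<in>space M. (\<Sum>i\<in>A. X i x) + X l x + X j x > u}"
proof -
  let ?P = "\<lambda>p. fst (fst p) < u - B \<and> snd (fst p) > u - fst (fst p) - T \<and> snd p > u - fst (fst p) - T"
  let ?Q = "\<lambda>p. fst (fst p) < u - B \<and> snd (fst p) > u - fst (fst p) - T \<and> snd p > u - fst (fst p) - T - a"
  have jA: "j \<notin> insert l A" using j l by simp
  have "1 * prob {x\<in>space M. ?P (((\<Sum>i\<in>A. X i x), X l x), X j x)}
      \<le> \<delta> * prob {x\<in>space M. ?Q (((\<Sum>i\<in>A. X i x), X l x), X j x)}"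
  proof (rule indep_coordinates_conditioning_bound[OF X_indep jA,
        where g="\<lambda>f. (\<Sum>i\<in>A. f i, f l)" and N="borel \<Otimes>\<^sub>M borel"])
    fix x assume "x \<in> space M"
    then show "((\<Sum>i\<in>A. X i x), X l x) = (\<lambda>f. (\<Sum>i\<in>A. f i, f l)) (\<lambda>i\<in>insert l A. X i x)"
      using l by simp
  next
    fix v :: "real \<times> real"
    obtain y z where v: "v = (y, z)" by fastforce
    show "1 * prob {x\<in>space M. ?P (v, X j x)} \<le> \<delta> * prob {x\<in>space M. ?Q (v, X j x)}"
    proof (cases "y < u - B \<and> z > u - y - T")
      case True
      then have "u - y - T - a \<ge> T" using B by simp
      then show ?thesis
        using True shift[of "u - y - T - a"] by (simp add: v prob_X_greater)
    qed (auto simp: v)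
  qed (use \<delta> in auto)
  also have "\<dots> \<le> \<delta> * prob {x\<in>space M. (\<Sum>i\<in>A. X i x) + X l x + X j x > u}"
    using \<delta> B by (auto intro!: mult_left_mono finite_measure_mono)
  finally show ?thesis by simp
qed

lemma sum_tail_recursion:
  assumes \<delta>: "\<delta> \<ge> 0" and shift: "\<And>t. t \<ge> T \<Longrightarrow> tail (t + a) \<le> \<delta> * tail t"
    and B: "2 * T + a \<le> B" and tail_B: "tail B > 0"
  shows "prob {x\<in>space M. (\<Sum>i<Suc (Suc m). X i x) > u + a}
    \<le> 3 * \<delta> * prob {x\<in>space M. (\<Sum>i<Suc (Suc m). X i x) > u}
      + prob {x\<in>space M. (\<Sum>i<Suc m. X i x) > u} / tail B"
proof -
  define R where "R x = (\<Sum>i<m. X i x)" for x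
  have sum_Suc: "(\<Sum>i<Suc m. X i x) = R x + X m x"
    and sum_Suc_Suc: "(\<Sum>i<Suc (Suc m). X i x) = R x + X m x + X (Suc m) x" for x
    by (simp_all add: R_def)
  let ?S2 = "prob {x\<in>space M. R x + X m x + X (Suc m) x > u}"
  let ?S1 = "prob {x\<in>space M. R x + X m x > u}"
  define E1 where "E1 = {x\<in>space M. R x \<ge> u - B}"
  define E2 where "E2 = {x\<in>space M. R x + X (Suc m) x \<le> u - T \<and> X m x > u + a - (R x + X (Suc m) x)}"
  define E3 where "E3 = {x\<in>space M. R x + X m x \<le> u - T \<and> X (Suc m) x > u + a - (R x + X m x)}"
  define E4 where "E4 = {x\<in>space M. R x < u - B \<and> X (Suc m) x > u - R x - T \<and> X m x > u - R x - T}"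
  have "tail B * prob E1 \<le> ?S1"
    using sum_ge_times_tail_le[of m "{..<m}" B "u - B"] by (simp add: E1_def R_def)
  then have P1: "prob E1 \<le> ?S1 / tail B"
    using tail_B by (simp add: field_simps)
  have P2: "prob E2 \<le> \<delta> * ?S2"
    using overshoot_one_summand[where j=m and A="insert (Suc m) {..<m}" and T=T and u=u, OF _ \<delta> shift]
    by (simp add: E2_def R_def ac_simps)
  have P3: "prob E3 \<le> \<delta> * ?S2"
    using overshoot_one_summand[where j="Suc m" and A="{..<Suc m}" and T=T and u=u, OF _ \<delta> shift]
    by (simp add: E3_def R_def)
  have P4: "prob E4 \<le> \<delta> * ?S2"
    using overshoot_two_summands[where j=m and A="{..<m}" and l="Suc m" and T=T and B=B and u=u,
      OF _ _ _ \<delta> shift B]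
    by (simp add: E4_def R_def ac_simps)
  have events: "E1 \<in> events" "E2 \<in> events" "E3 \<in> events" "E4 \<in> events"
    unfolding E1_def E2_def E3_def E4_def R_def by measurable
  have "prob {x\<in>space M. R x + X m x + X (Suc m) x > u + a} \<le> prob (E1 \<union> E2 \<union> E3 \<union> E4)"
    using events by (intro finite_measure_mono) (auto simp: E1_def E2_def E3_def E4_def)
  also have "\<dots> \<le> prob E1 + prob E2 + prob E3 + prob E4"
    using events measure_Un_le[of "E1 \<union> E2 \<union> E3" M E4] measure_Un_le[of "E1 \<union> E2" M E3]
      measure_Un_le[of E1 M E2] by auto
  finally show ?thesis
    unfolding sum_Suc_Suc sum_Suc using P1 P2 P3 P4 by linarith
qed

end

theorem lemma10:
  fixes M :: "'a measure" and X :: "nat \<Rightarrow> 'a \<Rightarrow> real" and a :: real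
  assumes "prob_space M"
    and "\<And>i. X i \<in> borel_measurable M"
    and "prob_space.indep_vars M (\<lambda>_. borel) X UNIV"
    and "\<And>i. distr M borel (X i) = distr M borel (X 0)"
    and "condP M (X 0) a"
  defines "S \<equiv> (\<lambda>k x. \<Sum>i<k. X i x)"
  shows "\<forall>\<epsilon>>0. \<exists>B>0. \<forall>k\<ge>3. \<forall>u>0.
    measure M {x \<in> space M. S k x > u + a}
      \<le> \<epsilon> * measure M {x \<in> space M. S k x > u}
        + measure M {x \<in> space M. S (k - 1) x > u} / measure M {x \<in> space M. X 0 x > B}"
proof (intro allI impI)
  fix \<epsilon> :: real assume \<epsilon>: "\<epsilon> > 0"
  interpret iid_condP M X a
    using assms by (simp add: iid_condP_def iid_condP_axioms_def)
  obtain T where T: "T > 0" and shift: "\<And>t. t \<ge> T \<Longrightarrow> tail (t + a) \<le> \<epsilon> / 3 * tail t"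
    using tail_shift_small[of "\<epsilon> / 3"] \<epsilon> by auto
  define B where "B = 2 * T + a"
  have B: "B > 0" using T a_pos by (simp add: B_def)
  show "\<exists>B>0. \<forall>k\<ge>3. \<forall>u>0. prob {x \<in> space M. S k x > u + a}
      \<le> \<epsilon> * prob {x \<in> space M. S k x > u}
        + prob {x \<in> space M. S (k - 1) x > u} / prob {x \<in> space M. X 0 x > B}"
  proof (intro exI[of _ B] conjI allI impI B)
    fix k :: nat and u :: real assume "k \<ge> 3"
    define m where "m = k - 2"
    have k: "k = Suc (Suc m)" using \<open>k \<ge> 3\<close> unfolding m_def by linarith
    have "prob {x \<in> space M. (\<Sum>i<Suc (Suc m). X i x) > u + a}
        \<le> 3 * (\<epsilon> / 3) * prob {x \<in> space M. (\<Sum>i<Suc (Suc m). X i x) > u}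
          + prob {x \<in> space M. (\<Sum>i<Suc m. X i x) > u} / tail B"
      by (rule sum_tail_recursion[where T=T, OF _ shift _ tail_pos[OF B]])
        (use \<epsilon> in \<open>simp_all add: B_def\<close>)
    then show "prob {x \<in> space M. S k x > u + a} \<le> \<epsilon> * prob {x \<in> space M. S k x > u}
        + prob {x \<in> space M. S (k - 1) x > u} / prob {x \<in> space M. X 0 x > B}"
      by (simp only: S_def k tail_def diff_Suc_1)
  qed
qed

end
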